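(* A graph $G$ is well-bicovered with $b(G)=|V(G)|-1$ if and only if there exists an odd cycle $C$ in $G$ such that every odd cycle of $G$ contains every vertex of $C$.
   Context: All graphs are finite and simple; "subgraph" means induced subgraph. $b(G)$ denotes the maximum order of an induced bipartite subgraph of $G$. $G$ is well-bicovered if every vertex-inclusion-maximal induced bipartite subgraph of $G$ has the same order. *)

theory Defs
  imports Main
begin

definition simple_graph :: "'a set \<Rightarrow> ('a \<Rightarrow> 'a \<Rightarrow> bool) \<Rightarrow> bool" where
  "simple_graph V E \<longleftrightarrow> finite V \<and> (\<forall>u v. E u v \<longrightarrow> E v u) \<and> (\<forall>v. \<not> E v v)
     \<and> (\<forall>u v. E u v \<longrightarrow> u \<in> V \<and> v \<in> V)"

definition induced_bipartite :: "('a \<Rightarrow> 'a \<Rightarrow> bool) \<Rightarrow> 'a set \<Rightarrow> bool" where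
  "induced_bipartite E S \<longleftrightarrow>
     (\<exists>c :: 'a \<Rightarrow> bool. \<forall>u\<in>S. \<forall>v\<in>S. E u v \<longrightarrow> c u \<noteq> c v)"

definition maximal_induced_bipartite ::
    "'a set \<Rightarrow> ('a \<Rightarrow> 'a \<Rightarrow> bool) \<Rightarrow> 'a set \<Rightarrow> bool" where
  "maximal_induced_bipartite V E S \<longleftrightarrow> S \<subseteq> V \<and> induced_bipartite E S \<and>
     (\<forall>T. S \<subset> T \<and> T \<subseteq> V \<longrightarrow> \<not> induced_bipartite E T)"

definition bip_number :: "'a set \<Rightarrow> ('a \<Rightarrow> 'a \<Rightarrow> bool) \<Rightarrow> nat" where
  "bip_number V E = Max {card S | S. S \<subseteq> V \<and> induced_bipartite E S}"

definition well_bicovered :: "'a set \<Rightarrow> ('a \<Rightarrow> 'a \<Rightarrow> bool) \<Rightarrow> bool" where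
  "well_bicovered V E \<longleftrightarrow>
     (\<forall>S T. maximal_induced_bipartite V E S \<and> maximal_induced_bipartite V E T
        \<longrightarrow> card S = card T)"

definition is_cycle :: "'a set \<Rightarrow> ('a \<Rightarrow> 'a \<Rightarrow> bool) \<Rightarrow> 'a list \<Rightarrow> bool" where
  "is_cycle V E cs \<longleftrightarrow> length cs \<ge> 3 \<and> distinct cs \<and> set cs \<subseteq> V \<and>
     (\<forall>i < length cs. E (cs ! i) (cs ! ((i + 1) mod length cs)))"

definition is_odd_cycle :: "'a set \<Rightarrow> ('a \<Rightarrow> 'a \<Rightarrow> bool) \<Rightarrow> 'a list \<Rightarrow> bool" where
  "is_odd_cycle V E cs \<longleftrightarrow> is_cycle V E cs \<and> odd (length cs)"

end

theory Submission
  imports Defs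
begin

text \<open>A set of vertices induces a bipartite subgraph iff it contains no odd cycle (Koenig).
  Suppose every maximal induced bipartite subgraph has \<open>|V| - 1\<close> vertices and \<open>G\<close> is not
  bipartite, and let \<open>M\<close> be an inclusion-minimal non-bipartite vertex set. For \<open>v \<in> M\<close>, the set
  \<open>M - {v}\<close> extends to a maximal bipartite set \<open>V - {w}\<close>; it cannot contain \<open>M\<close>, so \<open>w = v\<close>.
  Hence \<open>G - v\<close> is bipartite for every \<open>v \<in> M\<close>, i.e. every odd cycle passes through all of \<open>M\<close>,
  in particular through all vertices of an odd cycle inside \<open>M\<close>. Conversely, if every odd cycle
  contains the odd cycle \<open>C\<close>, then \<open>G - x\<close> is bipartite for each \<open>x\<close> on \<open>C\<close>; a maximal
  bipartite set misses some such \<open>x\<close> and therefore equals \<open>V - {x}\<close>.\<close>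

section \<open>Walks, odd cycles and bipartiteness\<close>

text \<open>A walk is the list of its vertices. A closed walk repeats its first vertex at the end, so it
  has \<open>length ps - 1\<close> edges: it is odd iff \<open>even (length ps)\<close>.\<close>

definition walk :: "'a set \<Rightarrow> ('a \<Rightarrow> 'a \<Rightarrow> bool) \<Rightarrow> 'a list \<Rightarrow> bool" where
  "walk S E ps \<longleftrightarrow> ps \<noteq> [] \<and> set ps \<subseteq> S \<and> successively E ps"

lemma successively_append_Cons_iff:
  "successively P (xs @ y # ys) \<longleftrightarrow> successively P (xs @ [y]) \<and> successively P (y # ys)"
  by (induction xs) (auto simp: successively_Cons hd_append)

lemma walk_Cons:
  "walk S E (u # ps) \<longleftrightarrow> u \<in> S \<and> (ps = [] \<or> E u (hd ps) \<and> walk S E ps)"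
  by (auto simp: walk_def successively_Cons)

lemma walk_rev:
  assumes "\<forall>u v. E u v \<longrightarrow> E v u" "walk S E ps"
  shows "walk S E (rev ps)"
  using assms by (auto simp: walk_def elim: successively_mono)

lemma walk_append_tl:
  assumes "walk S E ps" "walk S E qs" "last ps = hd qs"
  shows "walk S E (ps @ tl qs)" "hd (ps @ tl qs) = hd ps" "last (ps @ tl qs) = last qs"
    "length (ps @ tl qs) = length ps + length qs - 1"
proof -
  from assms(2) obtain q qs' where qs: "qs = q # qs'" unfolding walk_def by (cases qs) auto
  with assms show "walk S E (ps @ tl qs)"
    by (auto simp: walk_def successively_append_iff successively_Cons)
  show "hd (ps @ tl qs) = hd ps" using assms(1) by (simp add: walk_def)
  show "last (ps @ tl qs) = last qs" using assms(3) qs by auto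
  show "length (ps @ tl qs) = length ps + length qs - 1" using qs by simp
qed

lemma walk_color_parity:
  assumes "walk S E ps" "\<forall>u\<in>S. \<forall>v\<in>S. E u v \<longrightarrow> c u \<noteq> c v"
  shows "c (last ps) \<longleftrightarrow> (c (hd ps) \<longleftrightarrow> odd (length ps))"
  using assms(1)
proof (induction ps)
  case (Cons u ps)
  show ?case
  proof (cases "ps = []")
    case False
    with Cons.prems have "walk S E ps" "E u (hd ps)" "u \<in> S" by (auto simp: walk_Cons)
    moreover have "hd ps \<in> S" using \<open>walk S E ps\<close> by (auto simp: walk_def)
    ultimately have "c (hd ps) \<noteq> c u" using assms(2) by blast
    with Cons.IH \<open>walk S E ps\<close> False show ?thesis by auto
  qed simp
qed (simp add: walk_def)

lemma closed_walk_odd_length_if_induced_bipartite: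
  assumes "induced_bipartite E S" "walk S E ps" "hd ps = last ps"
  shows "odd (length ps)"
proof -
  obtain c :: "'a \<Rightarrow> bool" where "\<forall>u\<in>S. \<forall>v\<in>S. E u v \<longrightarrow> c u \<noteq> c v"
    using assms(1) unfolding induced_bipartite_def by blast
  from walk_color_parity[OF assms(2) this] assms(3) show ?thesis by auto
qed

lemma is_cycle_iff_walk:
  "is_cycle V E cs \<longleftrightarrow> 3 \<le> length cs \<and> distinct cs \<and> walk V E (cs @ [hd cs])"
proof -
  have "(\<forall>i. Suc i < length (cs @ [hd cs]) \<longrightarrow> E ((cs @ [hd cs]) ! i) ((cs @ [hd cs]) ! Suc i))
      \<longleftrightarrow> (\<forall>i < length cs. E (cs ! i) (cs ! ((i + 1) mod length cs)))" if "cs \<noteq> []"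
  proof -
    have "(cs @ [hd cs]) ! Suc i = cs ! ((i + 1) mod length cs)" if "i < length cs" for i
      using that \<open>cs \<noteq> []\<close> by (cases "Suc i = length cs") (auto simp: nth_append hd_conv_nth)
    then show ?thesis by (auto simp: nth_append)
  qed
  then show ?thesis
    unfolding is_cycle_def walk_def successively_conv_nth by (cases "cs = []") auto
qed

lemma walk_split_at_repeated_vertex:
  assumes "walk V E (xs @ y # ys @ y # zs)"
  shows "walk V E (y # ys @ [y])" "walk V E (xs @ y # zs)"
proof -
  have "xs @ y # ys @ y # zs = xs @ (y # ys @ [y]) @ zs"
    "xs @ y # ys @ y # zs = (xs @ [y]) @ ys @ y # zs"
    "xs @ y # ys @ y # zs = (xs @ y # ys) @ y # zs" by simp_all
  then have "successively E (y # ys @ [y])" "successively E (xs @ [y])" "successively E (y # zs)"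
    using assms unfolding walk_def by (metis successively_append_iff)+
  then have "successively E (xs @ y # zs)"
    unfolding successively_append_Cons_iff[of E xs y zs] by blast
  with \<open>successively E (y # ys @ [y])\<close> assms
  show "walk V E (y # ys @ [y])" "walk V E (xs @ y # zs)" unfolding walk_def by auto
qed

lemma is_odd_cycle_if_distinct_closed_walk:
  assumes "\<forall>v. \<not> E v v" "walk V E (ws @ [hd ws])" "distinct ws" "odd (length ws)"
  shows "is_odd_cycle V E ws"
proof -
  have "length ws \<noteq> 1"
  proof
    assume "length ws = 1"
    then obtain v where "ws = [v]" by (cases ws) auto
    with assms(1,2) show False by (simp add: walk_def)
  qed
  with assms(4) have "3 \<le> length ws" by presburger
  with assms(2-4) show ?thesis unfolding is_odd_cycle_def is_cycle_iff_walk by simp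
qed

lemma closed_walk_even_length_contains_odd_cycle:
  assumes "\<forall>v. \<not> E v v" "walk V E ps" "hd ps = last ps" "even (length ps)"
  shows "\<exists>C. is_odd_cycle V E C \<and> set C \<subseteq> set ps"
  using assms(2-4)
proof (induction ps rule: length_induct)
  case (1 ps)
  define ws where "ws = butlast ps"
  have "ps \<noteq> []" using "1.prems"(1) by (simp add: walk_def)
  with "1.prems"(3) have "ws \<noteq> []" "odd (length ws)"
    unfolding ws_def by (auto simp: butlast_conv_take le_Suc_eq)
  with \<open>ps \<noteq> []\<close> "1.prems"(2) have ps: "ps = ws @ [hd ws]"
    unfolding ws_def by (metis append_butlast_last_id hd_append2)
  show ?case
  proof (cases "distinct ws")
    case True
    with assms(1) "1.prems"(1) ps \<open>odd (length ws)\<close> have "is_odd_cycle V E ws"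
      by (metis is_odd_cycle_if_distinct_closed_walk)
    then show ?thesis using ps by auto
  next
    case False
    text \<open>A repeated vertex splits the closed walk into two shorter ones, one of them odd.\<close>
    then obtain xs y ys zs where ws: "ws = xs @ [y] @ ys @ [y] @ zs"
      using not_distinct_decomp by blast
    define qs where "qs = y # ys @ [y]"
    define rs where "rs = xs @ y # zs @ [hd ws]"
    have "walk V E qs" "walk V E rs"
      using walk_split_at_repeated_vertex[of V E xs y ys "zs @ [hd ws]"] "1.prems"(1) ps ws
      unfolding qs_def rs_def by simp_all
    moreover have "set qs \<subseteq> set ps" "set rs \<subseteq> set ps"
      using ps ws unfolding qs_def rs_def by auto
    moreover have "hd qs = last qs" "hd rs = last rs"
      using ws unfolding qs_def rs_def by (cases xs; simp)+
    moreover have "length qs < length ps" "length rs < length ps"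
      using ps ws unfolding qs_def rs_def by auto
    moreover have "even (length qs) \<or> even (length rs)"
      using "1.prems"(3) ps ws unfolding qs_def rs_def by auto
    ultimately obtain C where "is_odd_cycle V E C" "set C \<subseteq> set qs \<or> set C \<subseteq> set rs"
      using "1.IH" by meson
    then show ?thesis using \<open>set qs \<subseteq> set ps\<close> \<open>set rs \<subseteq> set ps\<close> by blast
  qed
qed

lemma induced_bipartite_if_closed_walks_odd_length:
  assumes sym: "\<forall>u v. E u v \<longrightarrow> E v u"
    and odd: "\<forall>ps. walk S E ps \<and> hd ps = last ps \<longrightarrow> odd (length ps)"
  shows "induced_bipartite E S"
proof -
  text \<open>Colour \<open>u\<close> by the parity of a walk to a fixed vertex \<open>root u\<close> of its component. Two
    adjacent vertices of the same colour would have walks of equal parity to their common root,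
    which together with the edge between them form an odd closed walk.\<close>
  define joins where "joins u v \<longleftrightarrow> (\<exists>ps. walk S E ps \<and> hd ps = u \<and> last ps = v)" for u v
  define root where "root u = (SOME v. joins u v)" for u
  define c where
    "c u \<longleftrightarrow> (\<exists>ps. walk S E ps \<and> hd ps = u \<and> last ps = root u \<and> odd (length ps))" for u
  show ?thesis unfolding induced_bipartite_def
  proof (intro exI[of _ c] ballI impI notI)
    fix u v assume uv: "u \<in> S" "v \<in> S" "E u v" and "c u = c v"
    have "joins u = joins v"
    proof -
      have "joins x w" if "x \<in> S" "E x y" "joins y w" for x y w
        using that unfolding joins_def by (metis walk_Cons last_ConsR list.sel(1) walk_def)
      then show ?thesis using uv sym by blast
    qed
    then have "root u = root v" unfolding root_def by simp
    have "joins u (root u)" if "u \<in> S" for u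
      unfolding root_def joins_def
      by (rule someI[of _ u], rule exI[of _ "[u]"]) (simp add: walk_def that)
    then obtain p q where p: "walk S E p" "hd p = u" "last p = root u"
      and q: "walk S E q" "hd q = v" "last q = root u"
      and parity: "odd (length p) \<longleftrightarrow> odd (length q)"
      using uv \<open>c u = c v\<close> \<open>root u = root v\<close> unfolding c_def joins_def by metis
    have "walk S E (u # q)"
      using uv q by (simp add: walk_Cons)
    moreover have "walk S E (rev p)" "hd (rev p) = last (u # q)"
      using walk_rev[OF sym p(1)] p q by (auto simp: walk_def hd_rev last_ConsR)
    ultimately have "walk S E ((u # q) @ tl (rev p))" "hd ((u # q) @ tl (rev p)) = u"
      "last ((u # q) @ tl (rev p)) = u" "length ((u # q) @ tl (rev p)) = length q + length p"
      using p walk_append_tl[of S E "u # q" "rev p"] by (auto simp: walk_def last_rev)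
    then show False using odd parity by fastforce
  qed
qed

theorem induced_bipartite_iff_no_odd_cycle:
  assumes "simple_graph V E" "S \<subseteq> V"
  shows "induced_bipartite E S \<longleftrightarrow> \<not> (\<exists>C. is_odd_cycle V E C \<and> set C \<subseteq> S)"
proof
  assume bip: "induced_bipartite E S"
  show "\<not> (\<exists>C. is_odd_cycle V E C \<and> set C \<subseteq> S)"
  proof
    assume "\<exists>C. is_odd_cycle V E C \<and> set C \<subseteq> S"
    then obtain C where C: "is_odd_cycle V E C" "set C \<subseteq> S" by blast
    then have "C \<noteq> []" "odd (length C)" "walk V E (C @ [hd C])"
      unfolding is_odd_cycle_def is_cycle_iff_walk by auto
    then have "walk S E (C @ [hd C])" using C(2) by (auto simp: walk_def)
    from closed_walk_odd_length_if_induced_bipartite[OF bip this] \<open>C \<noteq> []\<close> \<open>odd (length C)\<close>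
    show False by simp
  qed
next
  assume no_cycle: "\<not> (\<exists>C. is_odd_cycle V E C \<and> set C \<subseteq> S)"
  have irrefl: "\<forall>v. \<not> E v v" and sym: "\<forall>u v. E u v \<longrightarrow> E v u"
    using assms(1) by (auto simp: simple_graph_def)
  have "odd (length ps)" if ps: "walk S E ps" "hd ps = last ps" for ps
  proof (rule ccontr)
    assume "\<not> odd (length ps)"
    moreover have "walk V E ps" using ps(1) assms(2) by (auto simp: walk_def)
    ultimately obtain C where "is_odd_cycle V E C" "set C \<subseteq> set ps"
      using closed_walk_even_length_contains_odd_cycle[OF irrefl \<open>walk V E ps\<close> ps(2)] by blast
    moreover have "set ps \<subseteq> S" using ps(1) by (simp add: walk_def)
    ultimately show False using no_cycle by blast
  qed
  with sym show "induced_bipartite E S" by (simp add: induced_bipartite_if_closed_walks_odd_length)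
qed

lemma induced_bipartite_subset:
  assumes "induced_bipartite E T" "S \<subseteq> T"
  shows "induced_bipartite E S"
  using assms unfolding induced_bipartite_def by (metis subsetD)

lemma subset_all_odd_cycles_iff:
  assumes "simple_graph V E"
  shows "(\<forall>D. is_odd_cycle V E D \<longrightarrow> X \<subseteq> set D) \<longleftrightarrow> (\<forall>x\<in>X. induced_bipartite E (V - {x}))"
proof -
  have "x \<in> set D \<longleftrightarrow> \<not> set D \<subseteq> V - {x}" if "is_odd_cycle V E D" for x D
    using that unfolding is_odd_cycle_def is_cycle_def by blast
  moreover have "induced_bipartite E (V - {x}) \<longleftrightarrow>
      (\<forall>D. is_odd_cycle V E D \<longrightarrow> \<not> set D \<subseteq> V - {x})" for x
    using induced_bipartite_iff_no_odd_cycle[OF assms, of "V - {x}"] by blast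
  ultimately show ?thesis by blast
qed

section \<open>Maximal induced bipartite subgraphs\<close>

lemma induced_bipartite_empty: "induced_bipartite E {}"
  by (simp add: induced_bipartite_def)

lemma finite_induced_bipartite_cards:
  assumes "finite V"
  shows "finite {card S |S. S \<subseteq> V \<and> induced_bipartite E S}"
proof -
  have "{card S |S. S \<subseteq> V \<and> induced_bipartite E S} \<subseteq> card ` Pow V" by blast
  then show ?thesis by (rule finite_subset) (simp add: assms)
qed

lemma card_le_bip_number:
  assumes "finite V" "S \<subseteq> V" "induced_bipartite E S"
  shows "card S \<le> bip_number V E"
  unfolding bip_number_def using assms finite_induced_bipartite_cards[OF assms(1)]
  by (intro Max_ge) auto

lemma ex_maximum_induced_bipartite:
  assumes "finite V"
  shows "\<exists>S. maximal_induced_bipartite V E S \<and> card S = bip_number V E"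
proof -
  have "card {} \<in> {card S |S. S \<subseteq> V \<and> induced_bipartite E S}"
    by (intro CollectI exI[of _ "{}"]) (simp add: induced_bipartite_empty)
  then have "bip_number V E \<in> {card S |S. S \<subseteq> V \<and> induced_bipartite E S}"
    unfolding bip_number_def using Max_in[OF finite_induced_bipartite_cards[OF assms]] by blast
  then obtain S where S: "S \<subseteq> V" "induced_bipartite E S" "card S = bip_number V E" by auto
  have "\<not> induced_bipartite E T" if "S \<subset> T" "T \<subseteq> V" for T
  proof
    assume "induced_bipartite E T"
    then have "card T \<le> card S" using S(3) card_le_bip_number[OF assms that(2)] by simp
    moreover have "card S < card T" using that assms by (meson finite_subset psubset_card_mono)
    ultimately show False by simp
  qed
  with S have "maximal_induced_bipartite V E S" unfolding maximal_induced_bipartite_def by simp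
  with S(3) show ?thesis by blast
qed

lemma ex_maximal_induced_bipartite_superset:
  assumes "finite V" "S \<subseteq> V" "induced_bipartite E S"
  shows "\<exists>T. S \<subseteq> T \<and> maximal_induced_bipartite V E T"
proof -
  let ?A = "{T. T \<subseteq> V \<and> induced_bipartite E T}"
  have "?A \<subseteq> Pow V" by blast
  then have "finite ?A" by (rule finite_subset) (simp add: assms(1))
  moreover have "S \<in> ?A" using assms(2,3) by simp
  ultimately obtain T where T: "T \<in> ?A" "S \<subseteq> T" and max: "\<forall>T'\<in>?A. T \<subseteq> T' \<longrightarrow> T = T'"
    by (meson finite_has_maximal2)
  then have "maximal_induced_bipartite V E T"
    unfolding maximal_induced_bipartite_def by (simp add: psubset_eq) (use T in blast)
  with T(2) show ?thesis by blast
qed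

lemma well_bicovered_iff_card_maximal:
  assumes "finite V"
  shows "well_bicovered V E \<longleftrightarrow>
    (\<forall>S. maximal_induced_bipartite V E S \<longrightarrow> card S = bip_number V E)"
proof
  assume wb: "well_bicovered V E"
  obtain S\<^sub>0 where "maximal_induced_bipartite V E S\<^sub>0" "card S\<^sub>0 = bip_number V E"
    using ex_maximum_induced_bipartite[OF assms] by blast
  with wb show "\<forall>S. maximal_induced_bipartite V E S \<longrightarrow> card S = bip_number V E"
    unfolding well_bicovered_def by metis
qed (simp add: well_bicovered_def)

lemma well_bicovered_bip_number_iff:
  assumes "finite V"
  shows "(well_bicovered V E \<and> int (bip_number V E) = int (card V) - 1) \<longleftrightarrow>
    \<not> induced_bipartite E V \<and> (\<forall>S. maximal_induced_bipartite V E S \<longrightarrow> card S = card V - 1)"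
proof
  assume wb: "well_bicovered V E \<and> int (bip_number V E) = int (card V) - 1"
  then have "bip_number V E = card V - 1" "card V \<ge> 1" by auto
  with card_le_bip_number[OF assms order_refl, of E] have "\<not> induced_bipartite E V" by auto
  with wb show "\<not> induced_bipartite E V \<and>
      (\<forall>S. maximal_induced_bipartite V E S \<longrightarrow> card S = card V - 1)"
    using well_bicovered_iff_card_maximal[OF assms] \<open>bip_number V E = card V - 1\<close> by simp
next
  assume R: "\<not> induced_bipartite E V \<and>
      (\<forall>S. maximal_induced_bipartite V E S \<longrightarrow> card S = card V - 1)"
  then have "card V \<ge> 1"
    using assms induced_bipartite_empty[of E] by (auto simp: Suc_le_eq card_gt_0_iff)
  moreover obtain S\<^sub>0 where "maximal_induced_bipartite V E S\<^sub>0" "card S\<^sub>0 = bip_number V E"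
    using ex_maximum_induced_bipartite[OF assms] by blast
  ultimately show "well_bicovered V E \<and> int (bip_number V E) = int (card V) - 1"
    using R well_bicovered_iff_card_maximal[OF assms] by auto
qed

lemma maximal_induced_bipartite_eq_Diff:
  assumes "maximal_induced_bipartite V E S" "x \<in> V - S" "induced_bipartite E (V - {x})"
  shows "S = V - {x}"
proof (rule ccontr)
  assume "S \<noteq> V - {x}"
  with assms(1,2) have "S \<subset> V - {x}" unfolding maximal_induced_bipartite_def by blast
  with assms(1,3) show False unfolding maximal_induced_bipartite_def by (meson Diff_subset)
qed

lemma induced_bipartite_delete_critical_vertex:
  assumes "finite V"
    and card_maximal: "\<forall>T. maximal_induced_bipartite V E T \<longrightarrow> card T = card V - 1"
    and M: "M \<subseteq> V" "\<not> induced_bipartite E M" "\<forall>M'. M' \<subset> M \<longrightarrow> induced_bipartite E M'"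
    and "v \<in> M"
  shows "induced_bipartite E (V - {v})"
proof -
  have "M - {v} \<subset> M" using \<open>v \<in> M\<close> by blast
  then have "induced_bipartite E (M - {v})" using M(3) by simp
  moreover have "M - {v} \<subseteq> V" using M(1) by blast
  ultimately obtain T where T: "M - {v} \<subseteq> T" "maximal_induced_bipartite V E T"
    using ex_maximal_induced_bipartite_superset[OF assms(1)] by metis
  then have "T \<subseteq> V" "induced_bipartite E T"
    unfolding maximal_induced_bipartite_def by simp_all
  have "card T = card V - 1" using card_maximal T(2) by simp
  moreover have "card V \<ge> 1"
    using assms(1) \<open>v \<in> M\<close> M(1) by (auto simp: Suc_le_eq card_gt_0_iff)
  moreover have "card (V - T) = card V - card T"
    using card_Diff_subset[OF finite_subset[OF \<open>T \<subseteq> V\<close> assms(1)] \<open>T \<subseteq> V\<close>] .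
  ultimately have "card (V - T) = 1" by simp
  then obtain w where "V - T = {w}" by (rule card_1_singletonE)
  then have T_eq: "T = V - {w}" using \<open>T \<subseteq> V\<close> by blast
  have "w \<in> M"
  proof (rule ccontr)
    assume "w \<notin> M"
    then have "M \<subseteq> T" using T_eq M(1) by blast
    with induced_bipartite_subset[OF \<open>induced_bipartite E T\<close>] M(2) show False by blast
  qed
  with T(1) T_eq have "w = v" by blast
  with T_eq \<open>induced_bipartite E T\<close> show ?thesis by simp
qed

lemma ex_odd_cycle_with_bipartite_deletions_iff:
  assumes "simple_graph V E"
  shows "(\<exists>C. is_odd_cycle V E C \<and> (\<forall>x\<in>set C. induced_bipartite E (V - {x}))) \<longleftrightarrow>
    \<not> induced_bipartite E V \<and> (\<forall>S. maximal_induced_bipartite V E S \<longrightarrow> card S = card V - 1)"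
proof
  have fin: "finite V" using assms by (simp add: simple_graph_def)
  assume "\<exists>C. is_odd_cycle V E C \<and> (\<forall>x\<in>set C. induced_bipartite E (V - {x}))"
  then obtain C where C: "is_odd_cycle V E C" "\<forall>x\<in>set C. induced_bipartite E (V - {x})" by blast
  then have "set C \<subseteq> V" by (simp add: is_odd_cycle_def is_cycle_def)
  have "card S = card V - 1" if "maximal_induced_bipartite V E S" for S
  proof -
    have "S \<subseteq> V" "induced_bipartite E S" using that by (auto simp: maximal_induced_bipartite_def)
    then obtain x where "x \<in> set C" "x \<notin> S"
      using induced_bipartite_iff_no_odd_cycle[OF assms] C(1) by blast
    then have "S = V - {x}"
      using maximal_induced_bipartite_eq_Diff[OF that] C(2) \<open>set C \<subseteq> V\<close> by blast
    with \<open>x \<in> set C\<close> \<open>set C \<subseteq> V\<close> fin show ?thesis by auto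
  qed
  moreover have "\<not> induced_bipartite E V"
    using induced_bipartite_iff_no_odd_cycle[OF assms order_refl] C(1) \<open>set C \<subseteq> V\<close> by blast
  ultimately show "\<not> induced_bipartite E V \<and>
      (\<forall>S. maximal_induced_bipartite V E S \<longrightarrow> card S = card V - 1)" by blast
next
  have fin: "finite V" using assms by (simp add: simple_graph_def)
  assume "\<not> induced_bipartite E V \<and>
      (\<forall>S. maximal_induced_bipartite V E S \<longrightarrow> card S = card V - 1)"
  then have "\<not> induced_bipartite E V"
    and card_maximal: "\<forall>S. maximal_induced_bipartite V E S \<longrightarrow> card S = card V - 1" by blast+
  then obtain M where M: "M \<subseteq> V" "\<not> induced_bipartite E M"
      "\<forall>M'. M' \<subset> M \<longrightarrow> induced_bipartite E M'"
    using finite_has_minimal2[of "{M. M \<subseteq> V \<and> \<not> induced_bipartite E M}" V] fin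
    by (auto simp: psubset_eq) (metis order.trans)
  then obtain C where "is_odd_cycle V E C" "set C \<subseteq> M"
    using induced_bipartite_iff_no_odd_cycle[OF assms] by blast
  with induced_bipartite_delete_critical_vertex[OF fin card_maximal M]
  show "\<exists>C. is_odd_cycle V E C \<and> (\<forall>x\<in>set C. induced_bipartite E (V - {x}))" by blast
qed

theorem mainTheorem9:
  fixes V :: "'a set" and E :: "'a \<Rightarrow> 'a \<Rightarrow> bool"
  assumes "simple_graph V E"
  shows "(well_bicovered V E \<and> int (bip_number V E) = int (card V) - 1) \<longleftrightarrow>
         (\<exists>C. is_odd_cycle V E C \<and>
              (\<forall>D. is_odd_cycle V E D \<longrightarrow> set C \<subseteq> set D))"
proof -
  have "finite V" using assms by (simp add: simple_graph_def)
  then have "(well_bicovered V E \<and> int (bip_number V E) = int (card V) - 1) \<longleftrightarrow>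
      (\<exists>C. is_odd_cycle V E C \<and> (\<forall>x\<in>set C. induced_bipartite E (V - {x})))"
    using well_bicovered_bip_number_iff ex_odd_cycle_with_bipartite_deletions_iff[OF assms]
    by simp
  also have "\<dots> \<longleftrightarrow> (\<exists>C. is_odd_cycle V E C \<and> (\<forall>D. is_odd_cycle V E D \<longrightarrow> set C \<subseteq> set D))"
    using subset_all_odd_cycles_iff[OF assms] by blast
  finally show ?thesis .
qed

end
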